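(* Let $S[1..n]$ be a string. Given the lcp array and rank array of $S$, one can compute all useful LLRs of $S$ (listed in increasing order of start position) in $O(n)$ time and space.
   Context: For $1\le i\le j\le n$, $S[i..j]=S[i]\cdots S[j]$. A substring is unique if it has no other occurrence starting at a different position; it is a repeat otherwise. The left-bounded longest repeat starting at position $k$, $\mathrm{LLR}_k$, is a repeat $S[k..j]$ such that either $j=n$ or $S[k..j+1]$ is unique (it does not exist if $S[k]$ is unique). An LLR is useless if its position interval is contained in that of another LLR; otherwise it is useful. The suffix array $SA[1..n]$ is the permutation of $\{1,\ldots,n\}$ listing the starting positions of suffixes of $S$ in increasing lexicographic order (a proper prefix is smaller). The rank array is its inverse: $\mathrm{Rank}[i]=j$ iff $SA[j]=i$. The lcp array $\mathrm{LCP}[1..n+1]$ has $\mathrm{LCP}[1]=\mathrm{LCP}[n+1]=0$ and, for $2\le i\le n$, $\mathrm{LCP}[i]$ is the length of the longest common prefix of $S[SA[i-1]..n]$ and $S[SA[i]..n]$. Complexity is in the word-RAM model with each integer in $\{0,\ldots,n+1\}$ occupying a constant number of words. *)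

theory Defs
  imports Main
begin

text \<open>Strings are lists; positions are 1-based: S[i] = S ! (i-1).\<close>

definition substr :: "'a list \<Rightarrow> nat \<Rightarrow> nat \<Rightarrow> 'a list" where
  "substr S i j = take (Suc j - i) (drop (i - 1) S)"

definition unique_sub :: "'a list \<Rightarrow> nat \<Rightarrow> nat \<Rightarrow> bool" where
  "unique_sub S i j \<longleftrightarrow>
     (\<forall>k. 1 \<le> k \<and> k + (j - i) \<le> length S \<and> substr S k (k + (j - i)) = substr S i j \<longrightarrow> k = i)"

definition repeat_sub :: "'a list \<Rightarrow> nat \<Rightarrow> nat \<Rightarrow> bool" where
  "repeat_sub S i j \<longleftrightarrow> \<not> unique_sub S i j"

definition is_LLR :: "'a list \<Rightarrow> nat \<Rightarrow> nat \<Rightarrow> bool" where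
  "is_LLR S k j \<longleftrightarrow> 1 \<le> k \<and> k \<le> j \<and> j \<le> length S \<and> repeat_sub S k j \<and>
     (j = length S \<or> unique_sub S k (Suc j))"

definition useful_LLR :: "'a list \<Rightarrow> nat \<Rightarrow> nat \<Rightarrow> bool" where
  "useful_LLR S k j \<longleftrightarrow> is_LLR S k j \<and>
     \<not> (\<exists>k' j'. is_LLR S k' j' \<and> (k', j') \<noteq> (k, j) \<and> k' \<le> k \<and> j \<le> j')"

definition suf :: "'a list \<Rightarrow> nat \<Rightarrow> 'a list" where
  "suf S i = drop (i - 1) S"

text \<open>Strict lexicographic order on lists; a proper prefix is smaller.\<close>
definition lex_less :: "'a::linorder list \<Rightarrow> 'a list \<Rightarrow> bool" where
  "lex_less xs ys \<longleftrightarrow> (xs, ys) \<in> lexord {(a, b). a < b}"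

definition is_SA :: "'a::linorder list \<Rightarrow> (nat \<Rightarrow> nat) \<Rightarrow> bool" where
  "is_SA S SA \<longleftrightarrow> bij_betw SA {1..length S} {1..length S} \<and>
     (\<forall>i j. 1 \<le> i \<and> i < j \<and> j \<le> length S \<longrightarrow> lex_less (suf S (SA i)) (suf S (SA j)))"

definition is_rank :: "'a::linorder list \<Rightarrow> (nat \<Rightarrow> nat) \<Rightarrow> (nat \<Rightarrow> nat) \<Rightarrow> bool" where
  "is_rank S SA Rank \<longleftrightarrow> (\<forall>i j. 1 \<le> i \<and> i \<le> length S \<and> 1 \<le> j \<and> j \<le> length S \<longrightarrow>
     (Rank i = j \<longleftrightarrow> SA j = i))"

fun lcp_len :: "'a list \<Rightarrow> 'a list \<Rightarrow> nat" where
  "lcp_len (x # xs) (y # ys) = (if x = y then Suc (lcp_len xs ys) else 0)"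
| "lcp_len _ _ = 0"

definition is_LCP :: "'a::linorder list \<Rightarrow> (nat \<Rightarrow> nat) \<Rightarrow> (nat \<Rightarrow> nat) \<Rightarrow> bool" where
  "is_LCP S SA LCP \<longleftrightarrow> LCP 1 = 0 \<and> LCP (Suc (length S)) = 0 \<and>
     (\<forall>i. 2 \<le> i \<and> i \<le> length S \<longrightarrow> LCP i = lcp_len (suf S (SA (i - 1))) (suf S (SA i)))"

text \<open>Registers and memory cells hold natural numbers; each run is additionally required
  (in the theorem) to keep all stored values polynomially bounded in n, i.e. each value
  occupies O(1) words of Theta(log n) bits.  Instructions take unit time.\<close>

datatype instr =
    LoadConst nat nat
  | Add nat nat nat
  | Sub nat nat nat
  | Mul nat nat nat
  | Div nat nat nat
  | Mod nat nat nat
  | Less nat nat nat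
  | Eq nat nat nat
  | Load nat nat
  | Store nat nat
  | Jz nat nat
  | Jmp nat

record config =
  pc :: nat
  regs :: "nat \<Rightarrow> nat"
  mem :: "nat \<Rightarrow> nat"

fun exec :: "instr \<Rightarrow> config \<Rightarrow> config" where
  "exec (LoadConst r v) c = c\<lparr>pc := Suc (pc c), regs := (regs c)(r := v)\<rparr>"
| "exec (Add r a b) c = c\<lparr>pc := Suc (pc c), regs := (regs c)(r := regs c a + regs c b)\<rparr>"
| "exec (Sub r a b) c = c\<lparr>pc := Suc (pc c), regs := (regs c)(r := regs c a - regs c b)\<rparr>"
| "exec (Mul r a b) c = c\<lparr>pc := Suc (pc c), regs := (regs c)(r := regs c a * regs c b)\<rparr>"
| "exec (Div r a b) c = c\<lparr>pc := Suc (pc c), regs := (regs c)(r := regs c a div regs c b)\<rparr>"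
| "exec (Mod r a b) c = c\<lparr>pc := Suc (pc c), regs := (regs c)(r := regs c a mod regs c b)\<rparr>"
| "exec (Less r a b) c =
     c\<lparr>pc := Suc (pc c), regs := (regs c)(r := (if regs c a < regs c b then 1 else 0))\<rparr>"
| "exec (Eq r a b) c =
     c\<lparr>pc := Suc (pc c), regs := (regs c)(r := (if regs c a = regs c b then 1 else 0))\<rparr>"
| "exec (Load r a) c = c\<lparr>pc := Suc (pc c), regs := (regs c)(r := mem c (regs c a))\<rparr>"
| "exec (Store a r) c = c\<lparr>pc := Suc (pc c), mem := (mem c)(regs c a := regs c r)\<rparr>"
| "exec (Jz r l) c = c\<lparr>pc := (if regs c r = 0 then l else Suc (pc c))\<rparr>"
| "exec (Jmp l) c = c\<lparr>pc := l\<rparr>"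

definition halted :: "instr list \<Rightarrow> config \<Rightarrow> bool" where
  "halted P c \<longleftrightarrow> length P \<le> pc c"

definition step :: "instr list \<Rightarrow> config \<Rightarrow> config" where
  "step P c = (if halted P c then c else exec (P ! pc c) c)"

definition run :: "instr list \<Rightarrow> nat \<Rightarrow> config \<Rightarrow> config" where
  "run P t c = (step P ^^ t) c"

definition addr_used :: "instr list \<Rightarrow> config \<Rightarrow> nat" where
  "addr_used P c = (if halted P c then 0 else
     (case P ! pc c of Load r a \<Rightarrow> regs c a | Store a r \<Rightarrow> regs c a | _ \<Rightarrow> 0))"

definition input_config :: "nat \<Rightarrow> (nat \<Rightarrow> nat) \<Rightarrow> (nat \<Rightarrow> nat) \<Rightarrow> config" where
  "input_config n Rank LCP =
     \<lparr>pc = 0, regs = (\<lambda>_. 0),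
      mem = (\<lambda>a. if a = 0 then n
                 else if a \<le> n then Rank a
                 else if a \<le> 2 * n + 1 then LCP (a - n)
                 else 0)\<rparr>"

definition output_of :: "config \<Rightarrow> (nat \<times> nat) list" where
  "output_of c = map (\<lambda>i. (mem c (regs c 1 + 2 * i), mem c (regs c 1 + 2 * i + 1)))
                     [0..<regs c 0]"

end

theory Submission
  imports Defs
begin

text \<open>Suffix k shares its longest prefix with another suffix with one of its two neighbours in
  suffix order, so LLR_k has length L k = max LCP[Rank k] LCP[Rank k + 1] (it exists iff L k > 0).
  Dropping the first character of a repeat leaves a repeat, so the end positions k + L k - 1 never
  decrease; hence LLR_k is useless exactly when LLR_(k-1) ends at or after it, i.e. when
  L (k - 1) > L k.  A single left-to-right scan comparing L k with L (k - 1) therefore lists the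
  useful LLRs, and it runs on the word RAM with a constant number of instructions per position.\<close>

lemma lcp_len_le_length: "lcp_len xs ys \<le> length xs" "lcp_len xs ys \<le> length ys"
  by (induction xs ys rule: lcp_len.induct; auto)+

lemma lcp_len_commute: "lcp_len xs ys = lcp_len ys xs"
  by (induction xs ys rule: lcp_len.induct) auto

lemma le_lcp_len_iff:
  "l \<le> lcp_len xs ys \<longleftrightarrow> l \<le> length xs \<and> l \<le> length ys \<and> take l xs = take l ys"
proof (induction xs ys arbitrary: l rule: lcp_len.induct)
  case (1 x xs y ys)
  then show ?case by (cases l) auto
qed auto

lemma lcp_len_tl: "0 < lcp_len xs ys \<Longrightarrow> lcp_len (tl xs) (tl ys) = lcp_len xs ys - 1"
  by (cases xs; cases ys) auto

definition lex_le :: "'a::linorder list \<Rightarrow> 'a list \<Rightarrow> bool" where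
  "lex_le xs ys \<longleftrightarrow> xs = ys \<or> lex_less xs ys"

lemma lcp_len_lex_le_left:
  "lex_le xs ys \<Longrightarrow> lex_le ys zs \<Longrightarrow> lcp_len xs zs \<le> lcp_len ys zs"
proof (induction xs arbitrary: ys zs)
  case (Cons x xs)
  then show ?case by (cases ys; cases zs) (auto simp: lex_le_def lex_less_def)
qed simp

lemma lcp_len_lex_le_right:
  "lex_le xs ys \<Longrightarrow> lex_le ys zs \<Longrightarrow> lcp_len xs zs \<le> lcp_len xs ys"
proof (induction xs arbitrary: ys zs)
  case (Cons x xs)
  then show ?case by (cases ys; cases zs) (auto simp: lex_le_def lex_less_def)
qed simp

lemma substr_eq_take_suf: "substr S k (k + d) = take (Suc d) (suf S k)"
  by (simp add: substr_def suf_def Suc_diff_le)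

lemma length_suf: "length (suf S k) = length S - (k - 1)"
  by (simp add: suf_def)

lemma suf_Suc: "1 \<le> k \<Longrightarrow> suf S (Suc k) = tl (suf S k)"
  by (cases k) (auto simp: suf_def drop_Suc tl_drop)

definition llr_length :: "(nat \<Rightarrow> nat) \<Rightarrow> (nat \<Rightarrow> nat) \<Rightarrow> nat \<Rightarrow> nat" where
  "llr_length Rank LCP k = max (LCP (Rank k)) (LCP (Suc (Rank k)))"

definition useful_start :: "(nat \<Rightarrow> nat) \<Rightarrow> (nat \<Rightarrow> nat) \<Rightarrow> nat \<Rightarrow> bool" where
  "useful_start Rank LCP k \<longleftrightarrow> 0 < llr_length Rank LCP k \<and>
     (k = 1 \<or> llr_length Rank LCP (k - 1) \<le> llr_length Rank LCP k)"

definition useful_llrs_before :: "(nat \<Rightarrow> nat) \<Rightarrow> (nat \<Rightarrow> nat) \<Rightarrow> nat \<Rightarrow> (nat \<times> nat) list" where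
  "useful_llrs_before Rank LCP m =
     map (\<lambda>k. (k, k + llr_length Rank LCP k - 1)) (filter (useful_start Rank LCP) [1..<m])"

lemma useful_llrs_before_Suc:
  "1 \<le> k \<Longrightarrow> useful_llrs_before Rank LCP (Suc k) = useful_llrs_before Rank LCP k @
     (if useful_start Rank LCP k then [(k, k + llr_length Rank LCP k - 1)] else [])"
  by (simp add: useful_llrs_before_def)

lemma length_useful_llrs_before: "length (useful_llrs_before Rank LCP m) \<le> m - 1"
  using length_filter_le[of "useful_start Rank LCP" "[1..<m]"] by (simp add: useful_llrs_before_def)

lemma sorted_useful_llrs_before:
  "sorted_wrt (\<lambda>x y. fst x < fst y) (useful_llrs_before Rank LCP m)"
  by (simp add: useful_llrs_before_def sorted_wrt_map sorted_wrt_filter del: upt_Suc)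

locale suffix_structures =
  fixes S :: "'a::linorder list" and SA Rank LCP :: "nat \<Rightarrow> nat"
  assumes SA: "is_SA S SA" and Rank: "is_rank S SA Rank" and LCP: "is_LCP S SA LCP"
begin

abbreviation L :: "nat \<Rightarrow> nat" where
  "L \<equiv> llr_length Rank LCP"

lemma SA_bounds: "1 \<le> r \<Longrightarrow> r \<le> length S \<Longrightarrow> 1 \<le> SA r \<and> SA r \<le> length S"
  using SA unfolding is_SA_def bij_betw_def by auto

lemma Rank_bounds:
  assumes "1 \<le> k" "k \<le> length S"
  shows "1 \<le> Rank k \<and> Rank k \<le> length S \<and> SA (Rank k) = k"
proof -
  obtain r where r: "r \<in> {1..length S}" "SA r = k"
    using SA assms unfolding is_SA_def bij_betw_def by (metis atLeastAtMost_iff imageE)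
  then have "Rank k = r" using Rank assms unfolding is_rank_def by auto
  then show ?thesis using r by auto
qed

lemma Rank_SA: "1 \<le> r \<Longrightarrow> r \<le> length S \<Longrightarrow> Rank (SA r) = r"
  using Rank SA_bounds unfolding is_rank_def by auto

lemma lex_le_suf_SA:
  "1 \<le> r \<Longrightarrow> r \<le> r' \<Longrightarrow> r' \<le> length S \<Longrightarrow> lex_le (suf S (SA r)) (suf S (SA r'))"
  using SA unfolding is_SA_def lex_le_def by (cases "r = r'") auto

lemma LCP_eq: "2 \<le> r \<Longrightarrow> r \<le> length S \<Longrightarrow> LCP r = lcp_len (suf S (SA (r - 1))) (suf S (SA r))"
  using LCP unfolding is_LCP_def by auto

lemma LCP_le_length:
  assumes "1 \<le> r" "r \<le> Suc (length S)"
  shows "LCP r \<le> length S"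
proof (cases "2 \<le> r \<and> r \<le> length S")
  case True
  then show ?thesis
    using LCP_eq lcp_len_le_length(2)[of "suf S (SA (r - 1))" "suf S (SA r)"] by (simp add: length_suf)
next
  case False
  then have "r = 1 \<or> r = Suc (length S)" using assms by auto
  then show ?thesis using LCP unfolding is_LCP_def by auto
qed

lemma lcp_len_suf_le_llr_length:
  assumes k: "1 \<le> k" "k \<le> length S" and p: "1 \<le> p" "p \<le> length S" "p \<noteq> k"
  shows "lcp_len (suf S k) (suf S p) \<le> L k"
proof -
  define r q where "r = Rank k" and "q = Rank p"
  have r: "1 \<le> r" "r \<le> length S" "SA r = k" and q: "1 \<le> q" "q \<le> length S" "SA q = p"
    using Rank_bounds k p unfolding r_def q_def by auto
  consider "q < r" | "r < q" using p(3) q(3) r(3) by fastforce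
  then show ?thesis
  proof cases
    case 1
    have "lcp_len (suf S (SA q)) (suf S (SA r)) \<le> lcp_len (suf S (SA (r - 1))) (suf S (SA r))"
      by (intro lcp_len_lex_le_left lex_le_suf_SA) (use 1 q r in auto)
    then show ?thesis
      using 1 q r LCP_eq[of r] by (simp add: llr_length_def r_def lcp_len_commute)
  next
    case 2
    have "lcp_len (suf S (SA r)) (suf S (SA q)) \<le> lcp_len (suf S (SA r)) (suf S (SA (Suc r)))"
      by (intro lcp_len_lex_le_right lex_le_suf_SA) (use 2 q r in auto)
    then show ?thesis
      using 2 q r LCP_eq[of "Suc r"] by (simp add: llr_length_def r_def)
  qed
qed

lemma llr_length_attained:
  assumes k: "1 \<le> k" "k \<le> length S" and pos: "0 < L k"
  obtains p where "1 \<le> p" "p \<le> length S" "p \<noteq> k" "lcp_len (suf S k) (suf S p) = L k"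
proof -
  define r where "r = Rank k"
  have r: "1 \<le> r" "r \<le> length S" "SA r = k" using Rank_bounds[OF k] r_def by auto
  consider "L k = LCP r" "LCP r \<noteq> 0" | "L k = LCP (Suc r)" "LCP (Suc r) \<noteq> 0"
    using pos unfolding llr_length_def r_def by linarith
  then show ?thesis
  proof cases
    case 1
    then have "r \<noteq> 1" using LCP unfolding is_LCP_def by auto
    then have "SA (r - 1) \<noteq> k" using r Rank_SA[of "r - 1"] r_def by fastforce
    then show ?thesis
      using that[of "SA (r - 1)"] SA_bounds[of "r - 1"] r \<open>r \<noteq> 1\<close> 1 LCP_eq[of r]
      by (auto simp: lcp_len_commute)
  next
    case 2
    then have "Suc r \<le> length S" using LCP r unfolding is_LCP_def by (cases "r = length S") auto
    then have "SA (Suc r) \<noteq> k" using r Rank_SA[of "Suc r"] r_def by auto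
    then show ?thesis
      using that[of "SA (Suc r)"] SA_bounds[of "Suc r"] r \<open>Suc r \<le> length S\<close> 2 LCP_eq[of "Suc r"]
      by auto
  qed
qed

lemma llr_length_le:
  assumes "1 \<le> k" "k \<le> length S"
  shows "L k \<le> length S - (k - 1)"
proof (cases "L k = 0")
  case False
  then obtain p where "lcp_len (suf S k) (suf S p) = L k"
    using llr_length_attained[OF assms] by blast
  then show ?thesis using lcp_len_le_length(1)[of "suf S k" "suf S p"] by (simp add: length_suf)
qed simp

lemma repeat_sub_iff:
  assumes "1 \<le> k" "k \<le> j" "j \<le> length S"
  shows "repeat_sub S k j \<longleftrightarrow> Suc (j - k) \<le> L k"
proof -
  define d where "d = j - k"
  have j: "j = k + d" using assms d_def by auto
  have "repeat_sub S k j \<longleftrightarrow>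
      (\<exists>p. 1 \<le> p \<and> p + d \<le> length S \<and> p \<noteq> k \<and> take (Suc d) (suf S p) = take (Suc d) (suf S k))"
    unfolding repeat_sub_def unique_sub_def j by (auto simp: substr_eq_take_suf)
  also have "\<dots> \<longleftrightarrow> (\<exists>p. 1 \<le> p \<and> p \<le> length S \<and> p \<noteq> k \<and> Suc d \<le> lcp_len (suf S k) (suf S p))"
    using assms j by (auto simp: le_lcp_len_iff length_suf)
  also have "\<dots> \<longleftrightarrow> Suc d \<le> L k"
  proof
    assume "\<exists>p. 1 \<le> p \<and> p \<le> length S \<and> p \<noteq> k \<and> Suc d \<le> lcp_len (suf S k) (suf S p)"
    then show "Suc d \<le> L k" using lcp_len_suf_le_llr_length[of k] assms by fastforce
  next
    assume "Suc d \<le> L k"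
    moreover obtain p where "1 \<le> p" "p \<le> length S" "p \<noteq> k" "lcp_len (suf S k) (suf S p) = L k"
      using llr_length_attained[of k] assms calculation by auto
    ultimately show "\<exists>p. 1 \<le> p \<and> p \<le> length S \<and> p \<noteq> k \<and> Suc d \<le> lcp_len (suf S k) (suf S p)"
      by auto
  qed
  finally show ?thesis using d_def by simp
qed

lemma is_LLR_iff: "is_LLR S k j \<longleftrightarrow> 1 \<le> k \<and> k \<le> length S \<and> 0 < L k \<and> j = k + L k - 1"
proof
  assume "is_LLR S k j"
  then have k: "1 \<le> k" "k \<le> j" "j \<le> length S" and rep: "repeat_sub S k j"
    and max: "j = length S \<or> unique_sub S k (Suc j)"
    unfolding is_LLR_def by auto
  have "Suc (j - k) \<le> L k" using repeat_sub_iff k rep by auto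
  moreover have "L k \<le> Suc (j - k)"
  proof (cases "j = length S")
    case True
    then show ?thesis using llr_length_le[of k] k by auto
  next
    case False
    then show ?thesis using max repeat_sub_iff[of k "Suc j"] k unfolding repeat_sub_def by auto
  qed
  ultimately show "1 \<le> k \<and> k \<le> length S \<and> 0 < L k \<and> j = k + L k - 1" using k by auto
next
  assume a: "1 \<le> k \<and> k \<le> length S \<and> 0 < L k \<and> j = k + L k - 1"
  then have j: "k \<le> j" "j \<le> length S" using llr_length_le[of k] by auto
  have "repeat_sub S k j" using repeat_sub_iff[of k j] a j by auto
  moreover have "j = length S \<or> unique_sub S k (Suc j)"
    using repeat_sub_iff[of k "Suc j"] a j unfolding repeat_sub_def by (cases "j = length S") auto
  ultimately show "is_LLR S k j" unfolding is_LLR_def using a j by auto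
qed

text \<open>Shifting a common prefix of length L i by one position gives one of length L i - 1
  starting at i + 1.\<close>
lemma llr_end_le_Suc:
  assumes "1 \<le> i" "Suc i \<le> length S"
  shows "i + L i \<le> Suc i + L (Suc i)"
proof (cases "L i \<le> 1")
  case False
  obtain p where p: "1 \<le> p" "p \<le> length S" "p \<noteq> i" "lcp_len (suf S i) (suf S p) = L i"
    using llr_length_attained[of i] assms False by auto
  have "L i \<le> length S - (p - 1)"
    using lcp_len_le_length(2)[of "suf S i" "suf S p"] p by (simp add: length_suf)
  then have "Suc p \<le> length S" using False by auto
  have "lcp_len (suf S (Suc i)) (suf S (Suc p)) = L i - 1"
    using lcp_len_tl[of "suf S i" "suf S p"] p False assms by (simp add: suf_Suc)
  moreover have "lcp_len (suf S (Suc i)) (suf S (Suc p)) \<le> L (Suc i)"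
    using lcp_len_suf_le_llr_length p \<open>Suc p \<le> length S\<close> assms by auto
  ultimately show ?thesis by auto
qed auto

lemma llr_end_mono:
  assumes "1 \<le> i" "i \<le> i'" "i' \<le> length S"
  shows "i + L i \<le> i' + L i'"
  using assms(2,3)
proof (induction i' rule: dec_induct)
  case (step m)
  then show ?case using llr_end_le_Suc[of m] assms(1) by auto
qed simp

lemma useful_LLR_iff: "useful_LLR S k j \<longleftrightarrow> is_LLR S k j \<and> useful_start Rank LCP k"
proof
  assume u: "useful_LLR S k j"
  then have l: "is_LLR S k j" unfolding useful_LLR_def by auto
  then have k: "1 \<le> k" "k \<le> length S" "0 < L k" "j = k + L k - 1" using is_LLR_iff by auto
  have "L (k - 1) \<le> L k" if "k \<noteq> 1"
  proof (rule ccontr)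
    assume "\<not> L (k - 1) \<le> L k"
    then have "is_LLR S (k - 1) (k - 1 + L (k - 1) - 1)" using is_LLR_iff k that by auto
    then show False using u k that \<open>\<not> L (k - 1) \<le> L k\<close> unfolding useful_LLR_def by fastforce
  qed
  then show "is_LLR S k j \<and> useful_start Rank LCP k" using l k by (auto simp: useful_start_def)
next
  assume a: "is_LLR S k j \<and> useful_start Rank LCP k"
  then have k: "1 \<le> k" "k \<le> length S" "j = k + L k - 1" using is_LLR_iff by auto
  have "\<not> (is_LLR S k' j' \<and> (k', j') \<noteq> (k, j) \<and> k' \<le> k \<and> j \<le> j')" for k' j'
  proof
    assume c: "is_LLR S k' j' \<and> (k', j') \<noteq> (k, j) \<and> k' \<le> k \<and> j \<le> j'"
    then have k': "1 \<le> k'" "0 < L k'" "j' = k' + L k' - 1" using is_LLR_iff by auto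
    then have "k' < k" using c k by auto
    then have "k' + L k' \<le> (k - 1) + L (k - 1)" using llr_end_mono[of k' "k - 1"] k k' by auto
    then show False using a c k k' \<open>k' < k\<close> unfolding useful_start_def by auto
  qed
  then show "useful_LLR S k j" unfolding useful_LLR_def using a by blast
qed

lemma set_useful_llrs_before:
  "set (useful_llrs_before Rank LCP (Suc (length S))) = {(k, j). useful_LLR S k j}"
  unfolding useful_LLR_iff is_LLR_iff useful_llrs_before_def
  by (auto simp: useful_start_def less_Suc_eq_le)

end

lemma run_0 [simp]: "run P 0 c = c"
  by (simp add: run_def)

lemma run_Suc: "run P (Suc t) c = run P t (step P c)"
  by (simp add: run_def funpow_Suc_right del: funpow.simps)

lemma run_add: "run P (a + b) c = run P b (run P a c)"
  by (metis run_def funpow_add add.commute comp_apply)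

definition runs_within ::
    "instr list \<Rightarrow> (config \<Rightarrow> bool) \<Rightarrow> config \<Rightarrow> nat \<Rightarrow> (config \<Rightarrow> bool) \<Rightarrow> bool" where
  "runs_within P G c b Q \<longleftrightarrow> (\<exists>d\<le>b. (\<forall>t<d. G (run P t c)) \<and> Q (run P d c))"

lemma runs_within_done: "Q c \<Longrightarrow> runs_within P G c b Q"
  unfolding runs_within_def by (intro exI[of _ 0]) auto

lemma runs_within_step:
  assumes "0 < b" "G c" "runs_within P G (step P c) (b - 1) Q"
  shows "runs_within P G c b Q"
proof -
  obtain d where d: "d \<le> b - 1" "\<forall>t<d. G (run P t (step P c))" "Q (run P d (step P c))"
    using assms(3) unfolding runs_within_def by blast
  have "G (run P t c)" if "t < Suc d" for t
    using d assms(2) that by (cases t) (auto simp: run_Suc)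
  then show ?thesis
    unfolding runs_within_def using d assms(1) by (intro exI[of _ "Suc d"]) (simp add: run_Suc)
qed

lemma runs_within_trans:
  assumes "runs_within P G c b1 (\<lambda>c'. runs_within P G c' b2 Q)"
  shows "runs_within P G c (b1 + b2) Q"
proof -
  obtain d1 where d1: "d1 \<le> b1" "\<forall>t<d1. G (run P t c)" "runs_within P G (run P d1 c) b2 Q"
    using assms unfolding runs_within_def by blast
  obtain d2 where d2: "d2 \<le> b2" "\<forall>t<d2. G (run P t (run P d1 c))" "Q (run P d2 (run P d1 c))"
    using d1(3) unfolding runs_within_def by blast
  have "G (run P t c)" if "t < d1 + d2" for t
  proof (cases "t < d1")
    case False
    then have "run P t c = run P (t - d1) (run P d1 c)" by (simp add: run_add[symmetric])
    then show ?thesis using d2(2) that False by simp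
  qed (use d1(2) in blast)
  then show ?thesis
    unfolding runs_within_def using d1(1) d2(1,3) by (intro exI[of _ "d1 + d2"]) (simp add: run_add)
qed

lemma runs_within_mono:
  assumes "runs_within P G c b Q" "b \<le> b'" "\<And>c. Q c \<Longrightarrow> Q' c"
  shows "runs_within P G c b' Q'"
  using assms unfolding runs_within_def by (meson order_trans)

lemma map_stored_pairs:
  assumes "\<forall>i<length xs. (m (base + 2 * i), m (base + 2 * i + 1)) = xs ! i"
  shows "map (\<lambda>i. (m (base + 2 * i), m (base + 2 * i + 1))) [0..<length xs] = xs"
proof -
  have "map (\<lambda>i. (m (base + 2 * i), m (base + 2 * i + 1))) [0..<length xs] = map ((!) xs) [0..<length xs]"
    using assms by (intro map_cong) auto
  then show ?thesis by (simp add: map_nth)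
qed

text \<open>Registers: 0 = number of intervals output, 1 = output base 2n + 2, 2 = n, 3 = k,
  4 = length of LLR_(k-1) (0 for k = 1), 5 = 1, 10 = 0.  Loop at 6:
  while k \<le> n: r9 := max (LCP[Rank k]) (LCP[Rank k + 1]); useful := r4 \<le> r9 \<and> r9 \<noteq> 0;
  r4 := r9; if useful, append (k, k + r9 - 1) to the output; k := k + 1.\<close>
definition llr_program :: "instr list" where
  "llr_program =
    [Load 2 0, LoadConst 5 1, Add 1 2 2, Add 1 1 5, Add 1 1 5, LoadConst 3 1,
     Less 6 2 3, Jz 6 9, Jmp 32,
     Load 7 3, Add 8 7 2, Load 9 8, Add 8 8 5, Load 7 8, Less 8 9 7, Jz 8 17, Add 9 7 10,
     Less 8 9 4, Add 4 9 10, Jz 8 21, Jmp 30, Jz 9 30,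
     Add 6 0 0, Add 6 6 1, Store 6 3, Add 7 3 9, Sub 7 7 5, Add 6 6 5, Store 6 7, Add 0 0 5,
     Add 3 3 5, Jmp 6]"

lemma length_llr_program: "length llr_program = 32"
  by (simp add: llr_program_def)

lemmas nth_llr_program = arg_cong[where f = "\<lambda>P. P ! i", OF llr_program_def] for i

lemmas llr_program_step_simps = step_def halted_def length_llr_program nth_llr_program

lemma four_mul_add_le_power: "4 * n + 8 \<le> ((n::nat) + 2) ^ 24"
proof -
  have "4 * (n + 2) \<le> (n + 2) * (n + 2) * (n + 2)"
    by (intro mult_right_mono) (auto intro: order_trans[OF _ mult_mono[of 2 "n + 2" 2 "n + 2"]])
  also have "\<dots> = (n + 2) ^ 3" by (simp add: power3_eq_cube)
  also have "\<dots> \<le> (n + 2) ^ 24" by (rule power_increasing) auto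
  finally show ?thesis by simp
qed

locale llr_program_input =
  fixes n :: nat and Rank LCP :: "nat \<Rightarrow> nat"
  assumes Rank_range: "\<And>k. 1 \<le> k \<Longrightarrow> k \<le> n \<Longrightarrow> 1 \<le> Rank k \<and> Rank k \<le> n"
    and LCP_le: "\<And>r. 1 \<le> r \<Longrightarrow> r \<le> Suc n \<Longrightarrow> LCP r \<le> n"
begin

abbreviation c0 :: config where
  "c0 \<equiv> input_config n Rank LCP"

abbreviation L :: "nat \<Rightarrow> nat" where
  "L \<equiv> llr_length Rank LCP"

abbreviation outs :: "nat \<Rightarrow> (nat \<times> nat) list" where
  "outs \<equiv> useful_llrs_before Rank LCP"

definition bounded_config :: "config \<Rightarrow> bool" where
  "bounded_config c \<longleftrightarrow> (\<forall>r. regs c r \<le> 4 * n + 8) \<and> (\<forall>a. mem c a \<le> 4 * n + 8) \<and>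
     addr_used llr_program c \<le> 4 * n + 4"

abbreviation runs_to :: "config \<Rightarrow> nat \<Rightarrow> (config \<Rightarrow> bool) \<Rightarrow> bool" where
  "runs_to \<equiv> runs_within llr_program bounded_config"

text \<open>The premise pc c \<noteq> 6 is logically redundant: it makes repeated application of this rule
  stop at the loop head.\<close>
lemma runs_to_step_off_loop_head:
  "pc c \<noteq> 6 \<Longrightarrow> 0 < b \<Longrightarrow> bounded_config c \<Longrightarrow> runs_to (step llr_program c) (b - 1) Q \<Longrightarrow>
    runs_to c b Q"
  by (rule runs_within_step)

lemma c0_simps: "pc c0 = 0" "regs c0 r = 0" "mem c0 0 = n"
  by (simp_all add: input_config_def)

lemma mem_c0_le: "mem c0 a \<le> n"
  unfolding input_config_def using Rank_range LCP_le by auto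

lemma mem_c0_Rank: "1 \<le> k \<Longrightarrow> k \<le> n \<Longrightarrow> mem c0 k = Rank k"
  unfolding input_config_def by auto

lemma mem_c0_LCP: "1 \<le> r \<Longrightarrow> r \<le> Suc n \<Longrightarrow> mem c0 (r + n) = LCP r"
  unfolding input_config_def by auto

definition loop_inv :: "nat \<Rightarrow> config \<Rightarrow> bool" where
  "loop_inv k c \<longleftrightarrow> pc c = 6 \<and> 1 \<le> k \<and> k \<le> Suc n \<and>
     regs c 0 = length (outs k) \<and> regs c 1 = 2 * n + 2 \<and> regs c 2 = n \<and> regs c 3 = k \<and>
     regs c 4 = (if k = 1 then 0 else L (k - 1)) \<and> regs c 5 = 1 \<and> regs c 10 = 0 \<and>
     (\<forall>r. regs c r \<le> 4 * n + 8) \<and> (\<forall>a. mem c a \<le> 4 * n + 8) \<and>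
     (\<forall>a\<le>2 * n + 1. mem c a = mem c0 a) \<and>
     (\<forall>i<length (outs k). (mem c (2 * n + 2 + 2 * i), mem c (2 * n + 2 + 2 * i + 1)) = outs k ! i)"

lemma loop_entry: "runs_to c0 6 (loop_inv 1)"
  by ((rule runs_to_step_off_loop_head, simp add: llr_program_step_simps c0_simps, simp,
        (auto simp: bounded_config_def addr_used_def llr_program_step_simps c0_simps mem_c0_le[THEN le_trans])[1],
        simp add: llr_program_step_simps c0_simps)+,
      rule runs_within_done,
      auto simp: loop_inv_def c0_simps useful_llrs_before_def mem_c0_le[THEN le_trans])

lemma loop_iteration:
  assumes I: "loop_inv k c" and k: "k \<le> n"
  shows "runs_to c 24 (loop_inv (Suc k))"
proof -
  have inv: "pc c = 6" "1 \<le> k" "regs c 0 = length (outs k)" "regs c 1 = 2 * n + 2" "regs c 2 = n"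
    "regs c 3 = k" "regs c 4 = (if k = 1 then 0 else L (k - 1))" "regs c 5 = 1" "regs c 10 = 0"
    and bounds: "\<forall>r. regs c r \<le> 4 * n + 8" "\<forall>a. mem c a \<le> 4 * n + 8"
    and input: "\<forall>a\<le>2 * n + 1. mem c a = mem c0 a"
    and outputs: "\<forall>i<length (outs k). (mem c (2 * n + 2 + 2 * i), mem c (2 * n + 2 + 2 * i + 1)) = outs k ! i"
    using I unfolding loop_inv_def by auto
  have Rank_k: "1 \<le> Rank k" "Rank k \<le> n" using Rank_range[of k] inv k by auto
  define a b where "a = LCP (Rank k)" and "b = LCP (Suc (Rank k))"
  have "a \<le> n" "b \<le> n" using LCP_le Rank_k unfolding a_def b_def by auto
  have loads: "mem c k = Rank k" "mem c (Rank k + n) = a" "mem c (Suc (Rank k + n)) = b"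
    using input mem_c0_Rank[of k] mem_c0_LCP[of "Rank k"] mem_c0_LCP[of "Suc (Rank k)"] Rank_k k inv(2)
    unfolding a_def b_def by auto
  have L: "L k = max a b" unfolding a_def b_def llr_length_def ..
  have useful: "useful_start Rank LCP k \<longleftrightarrow> max a b \<noteq> 0 \<and> \<not> max a b < regs c 4"
    using inv(2,7) L by (auto simp: useful_start_def)
  have "length (outs k) \<le> n" using length_useful_llrs_before[of Rank LCP k] k by auto
  note state = inv(1-6,8,9) inv(4)[unfolded One_nat_def] loads
    \<comment> \<open>the simplifier writes register 1 of the program as Suc 0\<close>
  text \<open>Fixing the outcome of every comparison lets the simplifier decide each conditional jump.\<close>
  consider "a < b" "b < regs c 4" | "a < b" "\<not> b < regs c 4" | "\<not> a < b" "a < regs c 4"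
    | "\<not> a < b" "\<not> a < regs c 4" "a = 0" | "\<not> a < b" "\<not> a < regs c 4" "a \<noteq> 0"
    by blast
  then show ?thesis
    using k Rank_k \<open>a \<le> n\<close> \<open>b \<le> n\<close> \<open>length (outs k) \<le> n\<close> bounds input outputs inv(2)
    by cases
      ((rule runs_within_step, simp, (auto simp: bounded_config_def addr_used_def llr_program_step_simps state)[1],
         simp add: llr_program_step_simps state),
       (rule runs_to_step_off_loop_head, simp add: llr_program_step_simps state, simp,
         (auto simp: bounded_config_def addr_used_def llr_program_step_simps state)[1],
         simp add: llr_program_step_simps state)+,
       rule runs_within_done,
       auto simp: loop_inv_def useful_llrs_before_Suc useful L state nth_append less_Suc_eq)+
qed

definition finished :: "config \<Rightarrow> bool" where
  "finished c \<longleftrightarrow> halted llr_program c \<and> bounded_config c \<and> output_of c = outs (Suc n)"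

lemma loop_exit:
  assumes "loop_inv (Suc n) c"
  shows "runs_to c 3 finished"
proof -
  have state: "pc c = 6" "regs c 0 = length (outs (Suc n))" "regs c 1 = 2 * n + 2" "regs c 2 = n"
    "regs c 3 = Suc n" "regs c (Suc 0) = 2 * n + 2"
    and bounds: "regs c r \<le> 4 * n + 8" "mem c a \<le> 4 * n + 8"
    and outputs: "\<forall>i<length (outs (Suc n)).
        (mem c (2 * n + 2 + 2 * i), mem c (2 * n + 2 + 2 * i + 1)) = outs (Suc n) ! i"
    for r a
    using assms unfolding loop_inv_def by auto
  note output_list = map_stored_pairs[OF outputs, simplified]
  show ?thesis
    by ((rule runs_within_step, simp, (auto simp: bounded_config_def addr_used_def llr_program_step_simps state bounds)[1],
          simp add: llr_program_step_simps state),
        (rule runs_to_step_off_loop_head, simp add: llr_program_step_simps state, simp,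
          (auto simp: bounded_config_def addr_used_def llr_program_step_simps state bounds)[1],
          simp add: llr_program_step_simps state)+,
        rule runs_within_done,
        auto simp: finished_def bounded_config_def addr_used_def output_of_def llr_program_step_simps state bounds output_list)
qed

lemma loop_reached: "1 \<le> k \<Longrightarrow> k \<le> Suc n \<Longrightarrow> runs_to c0 (6 + 24 * (k - 1)) (loop_inv k)"
proof (induction k rule: dec_induct)
  case base
  show ?case using loop_entry by simp
next
  case (step k)
  then have "runs_to c0 (6 + 24 * (k - 1)) (\<lambda>c. runs_to c 24 (loop_inv (Suc k)))"
    using loop_iteration by (auto elim: runs_within_mono)
  then have "runs_to c0 (6 + 24 * (k - 1) + 24) (loop_inv (Suc k))" by (rule runs_within_trans)
  then show ?case using step.hyps(1) by (simp add: algebra_simps)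
qed

lemma llr_program_finishes: "runs_to c0 (24 * n + 9) finished"
proof -
  have "runs_to c0 (6 + 24 * n) (\<lambda>c. runs_to c 3 finished)"
    using loop_reached[of "Suc n"] loop_exit by (auto elim: runs_within_mono)
  then have "runs_to c0 (6 + 24 * n + 3) finished" by (rule runs_within_trans)
  then show ?thesis by (simp add: algebra_simps)
qed

lemma llr_program_correct:
  "\<exists>t\<le>24 * (n + 1). halted llr_program (run llr_program t c0) \<and>
     (\<forall>t'<t. addr_used llr_program (run llr_program t' c0) \<le> 24 * (n + 1)) \<and>
     (\<forall>t'\<le>t. (\<forall>r. regs (run llr_program t' c0) r \<le> (n + 2) ^ 24) \<and>
                (\<forall>a. mem (run llr_program t' c0) a \<le> (n + 2) ^ 24)) \<and>
     output_of (run llr_program t c0) = outs (Suc n)"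
proof -
  obtain t where t: "t \<le> 24 * n + 9" "\<forall>t'<t. bounded_config (run llr_program t' c0)"
    "finished (run llr_program t c0)"
    using llr_program_finishes unfolding runs_within_def by blast
  then have bounded: "bounded_config (run llr_program t' c0)" if "t' \<le> t" for t'
    using that unfolding finished_def by (cases "t' = t") auto
  have "regs (run llr_program t' c0) r \<le> (n + 2) ^ 24" "mem (run llr_program t' c0) a \<le> (n + 2) ^ 24"
    if "t' \<le> t" for t' r a
    using bounded[OF that] four_mul_add_le_power[of n] unfolding bounded_config_def by (meson order_trans)+
  moreover have "addr_used llr_program (run llr_program t' c0) \<le> 24 * (n + 1)" if "t' < t" for t'
    using bounded[of t'] that unfolding bounded_config_def by simp
  ultimately show ?thesis
    using t(1,3) unfolding finished_def by (intro exI[of _ t]) auto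
qed

end

context suffix_structures
begin

lemma llr_program_lists_useful_LLRs:
  "let n = length S; c0 = input_config n Rank LCP in
     \<exists>t. t \<le> 24 * (n + 1) \<and> halted llr_program (run llr_program t c0) \<and>
       (\<forall>t' < t. addr_used llr_program (run llr_program t' c0) \<le> 24 * (n + 1)) \<and>
       (\<forall>t' \<le> t. (\<forall>r. regs (run llr_program t' c0) r \<le> (n + 2) ^ 24) \<and>
                   (\<forall>a. mem (run llr_program t' c0) a \<le> (n + 2) ^ 24)) \<and>
       sorted_wrt (\<lambda>x y. fst x < fst y) (output_of (run llr_program t c0)) \<and>
       set (output_of (run llr_program t c0)) = {(k, j). useful_LLR S k j}"
proof -
  interpret prog: llr_program_input "length S" Rank LCP
    using Rank_bounds LCP_le_length by unfold_locales auto
  show ?thesis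
    using prog.llr_program_correct sorted_useful_llrs_before set_useful_llrs_before
    unfolding Let_def by auto
qed

end

theorem lemma6:
  "\<exists>(P :: instr list) (C :: nat).
     \<forall>(S :: 'a::linorder list) SA Rank LCP.
       is_SA S SA \<and> is_rank S SA Rank \<and> is_LCP S SA LCP \<longrightarrow>
       (let n = length S; c0 = input_config n Rank LCP in
        \<exists>t. t \<le> C * (n + 1) \<and> halted P (run P t c0) \<and>
            (\<forall>t' < t. addr_used P (run P t' c0) \<le> C * (n + 1)) \<and>
            (\<forall>t' \<le> t. (\<forall>r. regs (run P t' c0) r \<le> (n + 2) ^ C) \<and>
                        (\<forall>a. mem (run P t' c0) a \<le> (n + 2) ^ C)) \<and>
            sorted_wrt (\<lambda>x y. fst x < fst y) (output_of (run P t c0)) \<and>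
            set (output_of (run P t c0)) = {(k, j). useful_LLR S k j})"
  using suffix_structures.llr_program_lists_useful_LLRs unfolding suffix_structures_def
  by (intro exI[of _ llr_program] exI[of _ 24]) blast

end
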